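(* Consider the model below with $\epsilon_2\ge0$, fix all parameters other than $\epsilon_1$, let $\delta:=(M-1)(1-M_f\beta)+\lambda\sigma N$, and let $\bar{\epsilon}_{BR,RPE}\in[-\infty,\infty)$ be the number such that a BR-RPE exists if and only if $\epsilon_1\ge\bar{\epsilon}_{BR,RPE}$. If $\epsilon_1>\bar{\epsilon}_{BR,RPE}$, then: (i) there is exactly one E-stable BR-RPE; (ii) if $\delta\ge0$, the E-stable BR-RPE is of type PP or of type ZP; (iii) if $\delta<0$, the E-stable BR-RPE is the unique BR-RPE.
   Context: Parameters: $0<\beta<1$, $\sigma,\lambda,\mu>0$, $\psi>1$, $M,M_f,N\in(0,1]$ with $\min\{M,M_f,N\}<1$, $p,q\in(0,1]$ with $(p,q)\neq(1,1)$. The shock $\epsilon_t$ is a two-state Markov chain on $\{\epsilon_1,\epsilon_2\}$ with $\Pr(\epsilon_{t+1}=\epsilon_1\mid\epsilon_t=\epsilon_1)=p$, $\Pr(\epsilon_{t+1}=\epsilon_2\mid\epsilon_t=\epsilon_2)=q$; $\bar q:=(1-p)/(2-p-q)$. Model: $x_t=M\hat E_t x_{t+1}-\sigma(i_t-N\hat E_t\pi_{t+1})+\epsilon_t$, $\pi_t=\lambda x_t+M_f\beta\hat E_t\pi_{t+1}$, $i_t=\max\{\psi\pi_t,-\mu\}$. A BR-RPE is a pair $Y_j=(x_j,\pi_j)$, $j=1,2$, such that with $(\bar x,\bar\pi):=\bar qY_2+(1-\bar q)Y_1$ and $i_j=\max\{\psi\pi_j,-\mu\}$: $x_j=M\bar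 x-\sigma(i_j-N\bar\pi)+\epsilon_j$ and $\pi_j=\lambda x_j+M_f\beta\bar\pi$, $j=1,2$. Types: the ZLB binds in state $j$ if $\psi\pi_j\le-\mu$; type PP (no state), ZP (state 1 only), PZ (state 2 only), ZZ (both). Let $\hat A_P=\frac{1}{1+\lambda\sigma\psi}\begin{pmatrix}M&N\sigma-M_f\beta\sigma\psi\\ M\lambda&M_f\beta+N\lambda\sigma\end{pmatrix}$, $\hat A_Z=\begin{pmatrix}M&N\sigma\\ M\lambda&M_f\beta+N\lambda\sigma\end{pmatrix}$, $I$ the $2\times2$ identity, $DT^{PP}=\hat A_P-I$, $DT^{ZP}=\bar q\hat A_P+(1-\bar q)\hat A_Z-I$, $DT^{PZ}=(1-\bar q)\hat A_P+\bar q\hat A_Z-I$, $DT^{ZZ}=\hat A_Z-I$. A BR-RPE of type $i$ is E-stable if all eigenvalues of $DT^i$ have negative real parts. *)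

theory Defs
  imports Complex_Main "HOL-Library.Extended_Real" "Jordan_Normal_Form.Char_Poly"
begin

text \<open>Stationary probability weight of state 2: qbar = (1-p)/(2-p-q).\<close>
definition qbar :: "real \<Rightarrow> real \<Rightarrow> real" where
  "qbar p q = (1 - p) / (2 - p - q)"

definition is_BR_RPE ::
  "real \<Rightarrow> real \<Rightarrow> real \<Rightarrow> real \<Rightarrow> real \<Rightarrow> real \<Rightarrow> real \<Rightarrow> real \<Rightarrow> real \<Rightarrow> real
   \<Rightarrow> real \<Rightarrow> real \<Rightarrow> real \<times> real \<Rightarrow> real \<times> real \<Rightarrow> bool" where
  "is_BR_RPE \<beta> \<sigma> lam \<mu> \<psi> M Mf N p q e1 e2 Y1 Y2 =
    (let qb = qbar p q;
         x1 = fst Y1; pi1 = snd Y1; x2 = fst Y2; pi2 = snd Y2;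
         xb = qb * x2 + (1 - qb) * x1;
         pib = qb * pi2 + (1 - qb) * pi1;
         i1 = max (\<psi> * pi1) (- \<mu>);
         i2 = max (\<psi> * pi2) (- \<mu>)
     in x1 = M * xb - \<sigma> * (i1 - N * pib) + e1 \<and> pi1 = lam * x1 + Mf * \<beta> * pib \<and>
        x2 = M * xb - \<sigma> * (i2 - N * pib) + e2 \<and> pi2 = lam * x2 + Mf * \<beta> * pib)"

datatype eq_type = PP | ZP | PZ | ZZ

definition zlb_binds :: "real \<Rightarrow> real \<Rightarrow> real \<Rightarrow> bool" where
  "zlb_binds \<psi> \<mu> pi_j = (\<psi> * pi_j \<le> - \<mu>)"

definition type_of :: "real \<Rightarrow> real \<Rightarrow> real \<times> real \<Rightarrow> real \<times> real \<Rightarrow> eq_type" where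
  "type_of \<psi> \<mu> Y1 Y2 =
    (if zlb_binds \<psi> \<mu> (snd Y1) \<and> zlb_binds \<psi> \<mu> (snd Y2) then ZZ
     else if zlb_binds \<psi> \<mu> (snd Y1) then ZP
     else if zlb_binds \<psi> \<mu> (snd Y2) then PZ
     else PP)"

definition A_P :: "real \<Rightarrow> real \<Rightarrow> real \<Rightarrow> real \<Rightarrow> real \<Rightarrow> real \<Rightarrow> real \<Rightarrow> real mat" where
  "A_P \<beta> \<sigma> lam \<psi> M Mf N =
     (1 / (1 + lam * \<sigma> * \<psi>)) \<cdot>\<^sub>m
       mat_of_rows_list 2 [[M, N * \<sigma> - Mf * \<beta> * \<sigma> * \<psi>],
                           [M * lam, Mf * \<beta> + N * lam * \<sigma>]]"

definition A_Z :: "real \<Rightarrow> real \<Rightarrow> real \<Rightarrow> real \<Rightarrow> real \<Rightarrow> real \<Rightarrow> real mat" where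
  "A_Z \<beta> \<sigma> lam M Mf N =
       mat_of_rows_list 2 [[M, N * \<sigma>],
                           [M * lam, Mf * \<beta> + N * lam * \<sigma>]]"

definition DT :: "eq_type \<Rightarrow> real \<Rightarrow> real \<Rightarrow> real \<Rightarrow> real \<Rightarrow> real \<Rightarrow> real \<Rightarrow> real \<Rightarrow> real \<Rightarrow> real \<Rightarrow> real mat" where
  "DT t \<beta> \<sigma> lam \<psi> M Mf N p q =
    (let AP = A_P \<beta> \<sigma> lam \<psi> M Mf N; AZ = A_Z \<beta> \<sigma> lam M Mf N; qb = qbar p q in
     (case t of
        PP \<Rightarrow> AP
      | ZP \<Rightarrow> qb \<cdot>\<^sub>m AP + (1 - qb) \<cdot>\<^sub>m AZ
      | PZ \<Rightarrow> (1 - qb) \<cdot>\<^sub>m AP + qb \<cdot>\<^sub>m AZ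
      | ZZ \<Rightarrow> AZ) - 1\<^sub>m 2)"

definition E_stable ::
  "real \<Rightarrow> real \<Rightarrow> real \<Rightarrow> real \<Rightarrow> real \<Rightarrow> real \<Rightarrow> real \<Rightarrow> real \<Rightarrow> real \<Rightarrow> real
   \<Rightarrow> real \<times> real \<Rightarrow> real \<times> real \<Rightarrow> bool" where
  "E_stable \<beta> \<sigma> lam \<mu> \<psi> M Mf N p q Y1 Y2 =
    (\<forall>z. eigenvalue (map_mat complex_of_real (DT (type_of \<psi> \<mu> Y1 Y2) \<beta> \<sigma> lam \<psi> M Mf N p q)) z
         \<longrightarrow> Re z < 0)"

end

theory Submission
  imports Defs
begin

(* Averaging the Phillips curves over the stationary distribution gives
   pibar = lam * xbar / (1 - Mf beta), so a BR-RPE is pinned down by its average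
   output gap X: in each state the output gap is the smaller of two affine functions
   of X (ZLB binding, Taylor rule active), and X must be a zero of
   G(X) = qbar x2(X) + (1 - qbar) x1(X) - X.  G is the minimum of four affine
   branches, one per equilibrium type t; det DT^t is -(1 - Mf beta) times the slope
   of branch t, and det DT^t + trace DT^t < 0 always, so E-stability means that G
   is strictly decreasing at the equilibrium.  A concave function has at most one
   such zero, and if delta < 0 every branch decreases, so every BR-RPE is stable.
   For existence, walk right from any equilibrium to the first zero of a decreasing
   branch.  If the branch active there were not decreasing, G would be <= 0
   everywhere; since G increases strictly with eps1, there would be no BR-RPE
   slightly below eps1 (if qbar = 1, eps2 >= 0 rules out such a kink directly).
   Finally, if delta >= 0, a stable equilibrium of type PZ would keep G decreasing up
   to the point where the two regimes of state 2 cross; that point is negative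
   because eps2 >= 0, and there G is positive. *)

section \<open>Stability of real 2 by 2 matrices\<close>

lemma det_2x2:
  assumes "(A :: 'a :: comm_ring_1 mat) \<in> carrier_mat 2 2"
  shows "det A = A $$ (0,0) * A $$ (1,1) - A $$ (0,1) * A $$ (1,0)"
  using assms
  apply (subst laplace_expansion_column[of A 2 0])
  apply (auto simp: numeral_2_eq_2 lessThan_Suc cofactor_def mat_delete_def)
  apply (subst (1 2) det_single)
  apply (auto simp: algebra_simps)
  done

lemma eigenvalue_2x2_iff:
  fixes B :: "real mat"
  assumes "B \<in> carrier_mat 2 2"
  shows "eigenvalue (map_mat complex_of_real B) z \<longleftrightarrow>
    z\<^sup>2 - of_real (B $$ (0,0) + B $$ (1,1)) * z + of_real (det B) = 0"
proof -
  have "map_mat complex_of_real B \<in> carrier_mat 2 2"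
    using assms by simp
  then have "eigenvalue (map_mat complex_of_real B) z \<longleftrightarrow>
      det (char_matrix (map_mat complex_of_real B) z) = 0"
    by (rule eigenvalue_det)
  then show ?thesis
    using assms by (simp add: det_2x2 char_matrix_def power2_eq_square algebra_simps)
qed

lemma quadratic_root_Re_neg:
  fixes z :: complex
  assumes "0 < D" "T < 0" and root: "z\<^sup>2 - of_real T * z + of_real D = 0"
  shows "Re z < 0"
proof -
  have re: "(Re z)\<^sup>2 - (Im z)\<^sup>2 - T * Re z + D = 0" and im: "(2 * Re z - T) * Im z = 0"
    using arg_cong[OF root, of Re] arg_cong[OF root, of Im]
    by (auto simp: power2_eq_square algebra_simps)
  show ?thesis
  proof (cases "Im z = 0")
    case True
    then show ?thesis
      using re assms(1,2) by (smt (verit) mult_nonpos_nonneg zero_le_power2 power2_eq_square)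
  next
    case False
    then show ?thesis
      using im assms(2) by simp
  qed
qed

lemma quadratic_root_Re_nonneg_exists:
  fixes T D :: real
  assumes "D \<le> 0 \<or> 0 \<le> T"
  shows "\<exists>z::complex. z\<^sup>2 - of_real T * z + of_real D = 0 \<and> 0 \<le> Re z"
proof (cases "4 * D \<le> T\<^sup>2")
  case True
  define r where "r = sqrt (T\<^sup>2 - 4 * D)"
  have r2: "r\<^sup>2 = T\<^sup>2 - 4 * D" and "0 \<le> r"
    using True by (simp_all add: r_def)
  moreover have "\<bar>T\<bar> \<le> r" if "D \<le> 0"
    unfolding r_def using that by (simp add: real_le_rsqrt)
  ultimately have "0 \<le> T + r"
    using assms by linarith
  moreover have "((T + r) / 2)\<^sup>2 - T * ((T + r) / 2) + D = 0"
    using r2 by (simp add: power2_eq_square field_simps)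
  then have "(complex_of_real ((T + r) / 2))\<^sup>2 - of_real T * of_real ((T + r) / 2) + of_real D = 0"
    by (metis of_real_0 of_real_add of_real_diff of_real_mult of_real_power)
  ultimately show ?thesis
    by (intro exI[of _ "complex_of_real ((T + r) / 2)"]) simp
next
  case False
  define r where "r = sqrt (4 * D - T\<^sup>2)"
  have r2: "r\<^sup>2 = 4 * D - T\<^sup>2"
    using False by (simp add: r_def)
  have "0 \<le> T"
    using assms False by (smt (verit) zero_le_power2)
  moreover have "(Complex (T / 2) (r / 2))\<^sup>2 - of_real T * Complex (T / 2) (r / 2) + of_real D = 0"
    using r2 by (simp add: complex_eq_iff power2_eq_square field_simps)
  ultimately show ?thesis
    by (intro exI[of _ "Complex (T / 2) (r / 2)"]) simp
qed

lemma quadratic_roots_Re_neg_iff: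
  fixes T D :: real
  shows "(\<forall>z::complex. z\<^sup>2 - of_real T * z + of_real D = 0 \<longrightarrow> Re z < 0) \<longleftrightarrow> 0 < D \<and> T < 0"
  using quadratic_root_Re_neg quadratic_root_Re_nonneg_exists[of D T] by force

lemma routh_hurwitz_2x2:
  fixes B :: "real mat"
  assumes "B \<in> carrier_mat 2 2"
  shows "(\<forall>z. eigenvalue (map_mat complex_of_real B) z \<longrightarrow> Re z < 0) \<longleftrightarrow>
    0 < det B \<and> B $$ (0,0) + B $$ (1,1) < 0"
  unfolding eigenvalue_2x2_iff[OF assms] by (rule quadratic_roots_Re_neg_iff)

section \<open>Minima of finitely many affine functions\<close>

lemma min_affine_stable_zero_exists:
  fixes f :: "'i \<Rightarrow> real \<Rightarrow> real" and s :: "'i \<Rightarrow> real"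
  assumes affine: "\<And>i x y. f i y = f i x + s i * (y - x)"
    and fin: "finite {i. s i < 0}" and "s i0 < 0" and nonneg: "\<And>i. 0 \<le> f i x0"
  shows "\<exists>z i. x0 \<le> z \<and> (\<forall>j. 0 \<le> f j z) \<and> s i < 0 \<and> f i z = 0"
proof -
  define root where "root i = x0 - f i x0 / s i" for i
  have f_root: "f i y = s i * (y - root i)" if "s i < 0" for i y
  proof -
    have "s i * (y - root i) = f i x0 + s i * (y - x0)"
      using that by (simp add: root_def field_simps)
    then show ?thesis
      using affine[where i=i and x=x0 and y=y] by simp
  qed
  define z where "z = Min (root ` {i. s i < 0})"
  have "z \<in> root ` {i. s i < 0}"
    unfolding z_def using fin \<open>s i0 < 0\<close> by (intro Min_in) auto
  then obtain i where i: "s i < 0" "z = root i"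
    by blast
  have z_le: "z \<le> root j" if "s j < 0" for j
    unfolding z_def using fin that by simp
  have "x0 \<le> z"
    using i nonneg[of i] by (simp add: root_def divide_nonneg_neg)
  have "0 \<le> f j z" for j
  proof (cases "s j < 0")
    case True
    then show ?thesis
      using f_root[OF True] z_le[OF True] by (simp add: mult_nonpos_nonpos)
  next
    case False
    then show ?thesis
      using affine[where i=j and x=x0 and y=z] nonneg[of j] \<open>x0 \<le> z\<close> by (simp add: not_less)
  qed
  moreover have "f i z = 0"
    using f_root[OF i(1)] i(2) by simp
  ultimately show ?thesis
    using \<open>x0 \<le> z\<close> i(1) by blast
qed

lemma min_affine_nonpos_at_kink:
  fixes f :: "'i \<Rightarrow> real \<Rightarrow> real" and s :: "'i \<Rightarrow> real"
  assumes affine: "\<And>i x y. f i y = f i x + s i * (y - x)"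
    and "f i z = 0" "0 \<le> s i" "f j z = 0" "s j < 0"
  shows "f i y \<le> 0 \<or> f j y \<le> 0"
proof (cases "y \<le> z")
  case True
  then have "s i * (y - z) \<le> 0"
    using \<open>0 \<le> s i\<close> by (simp add: mult_nonneg_nonpos)
  then show ?thesis
    using affine[where i=i and x=z and y=y] \<open>f i z = 0\<close> by linarith
next
  case False
  then have "s j * (y - z) \<le> 0"
    using \<open>s j < 0\<close> by (simp add: mult_nonpos_nonneg)
  then show ?thesis
    using affine[where i=j and x=z and y=y] \<open>f j z = 0\<close> by linarith
qed

section \<open>The model as a function of the average output gap\<close>

definition zlb_state1 :: "eq_type \<Rightarrow> bool" where
  "zlb_state1 t \<longleftrightarrow> t = ZP \<or> t = ZZ"

definition zlb_state2 :: "eq_type \<Rightarrow> bool" where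
  "zlb_state2 t \<longleftrightarrow> t = PZ \<or> t = ZZ"

lemma zlb_state1_type_of: "zlb_state1 (type_of \<psi> \<mu> Y1 Y2) \<longleftrightarrow> zlb_binds \<psi> \<mu> (snd Y1)"
  by (simp add: zlb_state1_def type_of_def)

lemma zlb_state2_type_of: "zlb_state2 (type_of \<psi> \<mu> Y1 Y2) \<longleftrightarrow> zlb_binds \<psi> \<mu> (snd Y2)"
  by (simp add: zlb_state2_def type_of_def)

lemma finite_UNIV_eq_type: "finite (UNIV :: eq_type set)"
  by (rule finite_subset[of _ "{PP, ZP, PZ, ZZ}"]) (use eq_type.exhaust in auto)

lemma A_P_carrier: "A_P \<beta> \<sigma> lam \<psi> M Mf N \<in> carrier_mat 2 2"
  unfolding A_P_def mat_of_rows_list_def carrier_mat_def by simp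

lemma A_Z_carrier: "A_Z \<beta> \<sigma> lam M Mf N \<in> carrier_mat 2 2"
  unfolding A_Z_def mat_of_rows_list_def carrier_mat_def by simp

lemmas A_P_dims = carrier_matD[OF A_P_carrier] and A_Z_dims = carrier_matD[OF A_Z_carrier]

locale br_model =
  fixes \<beta> \<sigma> lam \<mu> \<psi> M Mf N p q e2 :: real
  assumes \<beta>_pos: "0 < \<beta>" and \<beta>_less_1: "\<beta> < 1" and \<sigma>_pos: "0 < \<sigma>" and lam_pos: "0 < lam"
    and \<mu>_pos: "0 < \<mu>" and \<psi>_gt_1: "1 < \<psi>" and M_pos: "0 < M" and M_le_1: "M \<le> 1"
    and Mf_pos: "0 < Mf" and Mf_le_1: "Mf \<le> 1" and N_pos: "0 < N" and N_le_1: "N \<le> 1"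
    and p_le_1: "p \<le> 1" and q_le_1: "q \<le> 1" and not_both_1: "(p, q) \<noteq> (1, 1)"
    and e2_nonneg: "0 \<le> e2"
begin

abbreviation "qb \<equiv> qbar p q"
abbreviation "BR_RPE e1 Y1 Y2 \<equiv> is_BR_RPE \<beta> \<sigma> lam \<mu> \<psi> M Mf N p q e1 e2 Y1 Y2"
abbreviation "regime Y1 Y2 \<equiv> type_of \<psi> \<mu> Y1 Y2"

(* Given the average output gap X, average inflation is pibar_coef * X.  gap_Z X e and gap_P X e
   solve the IS and Phillips curves of a state with shock e under i = -mu and under
   i = psi * pi respectively. *)
definition "pibar_coef = lam / (1 - Mf * \<beta>)"
definition "taylor_den = 1 + lam * \<sigma> * \<psi>"
definition "slope_Z = M + \<sigma> * N * pibar_coef"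
definition "slope_P = (slope_Z - \<sigma> * \<psi> * Mf * \<beta> * pibar_coef) / taylor_den"
definition "gap_Z X e = slope_Z * X + \<sigma> * \<mu> + e"
definition "gap_P X e = slope_P * X + e / taylor_den"
definition "gap X e = min (gap_Z X e) (gap_P X e)"
definition "infl X x = lam * x + Mf * \<beta> * (pibar_coef * X)"
definition "state_at X e = (gap X e, infl X (gap X e))"
definition "xbar Y1 Y2 = qb * fst Y2 + (1 - qb) * fst Y1"

(* The map X \<mapsto> xbar (state_at X e1) (state_at X e2) - X, whose zeros are the BR-RPEs,
   is the minimum over t of the affine functions branch e1 t. *)
definition "gap_in b X e = (if b then gap_Z X e else gap_P X e)"
definition "branch e1 t X =
  qb * gap_in (zlb_state2 t) X e2 + (1 - qb) * gap_in (zlb_state1 t) X e1 - X"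
definition "weight_P t = (case t of PP \<Rightarrow> 1 | ZP \<Rightarrow> qb | PZ \<Rightarrow> 1 - qb | ZZ \<Rightarrow> 0)"
definition "branch_slope t = weight_P t * slope_P + (1 - weight_P t) * slope_Z - 1"

lemma qbar_nonneg: "0 \<le> qb" and qbar_le_1: "qb \<le> 1"
proof -
  have "0 < 2 - p - q"
    using p_le_1 q_le_1 not_both_1 by (cases "p = 1"; cases "q = 1") auto
  then show "0 \<le> qb" "qb \<le> 1"
    using p_le_1 q_le_1 by (simp_all add: qbar_def)
qed

lemma Mf_\<beta>_less_1: "Mf * \<beta> < 1"
proof -
  have "Mf * \<beta> \<le> \<beta>"
    using mult_right_mono[OF Mf_le_1, of \<beta>] \<beta>_pos by simp
  then show ?thesis
    using \<beta>_less_1 by simp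
qed

lemma taylor_den_gt_1: "1 < taylor_den"
  unfolding taylor_den_def using lam_pos \<sigma>_pos \<psi>_gt_1 by simp

lemma pibar_coef_pos: "0 < pibar_coef"
  unfolding pibar_coef_def using lam_pos Mf_\<beta>_less_1 by simp

lemma pibar_coef_mult: "(1 - Mf * \<beta>) * pibar_coef = lam"
  using Mf_\<beta>_less_1 by (simp add: pibar_coef_def)

lemma pibar_coef_fixed_point: "pibar_coef * X = lam * X + Mf * \<beta> * (pibar_coef * X)"
  using Mf_\<beta>_less_1 by (simp add: pibar_coef_def field_simps)

lemma slope_Z_mult: "(1 - Mf * \<beta>) * slope_Z = (1 - Mf * \<beta>) * M + \<sigma> * N * lam"
proof -
  have "(1 - Mf * \<beta>) * slope_Z = (1 - Mf * \<beta>) * M + \<sigma> * N * ((1 - Mf * \<beta>) * pibar_coef)"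
    unfolding slope_Z_def by (simp add: algebra_simps)
  then show ?thesis
    unfolding pibar_coef_mult .
qed

lemma slope_Z_pos: "0 < slope_Z"
proof -
  have "0 < \<sigma> * N * pibar_coef"
    using \<sigma>_pos N_pos pibar_coef_pos by simp
  then show ?thesis
    unfolding slope_Z_def using M_pos by linarith
qed

lemma taylor_den_slope_P: "taylor_den * slope_P = slope_Z - \<sigma> * \<psi> * Mf * \<beta> * pibar_coef"
  using taylor_den_gt_1 by (simp add: slope_P_def)

lemma slope_P_less_slope_Z: "slope_P < slope_Z"
proof -
  have "taylor_den * slope_P < slope_Z"
    using \<sigma>_pos \<psi>_gt_1 Mf_pos \<beta>_pos pibar_coef_pos by (simp add: taylor_den_slope_P)
  also have "slope_Z < taylor_den * slope_Z"
    using taylor_den_gt_1 slope_Z_pos by simp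
  finally show ?thesis
    using taylor_den_gt_1 by simp
qed

lemma slope_P_less_1: "slope_P < 1"
proof -
  have "pibar_coef * (N - \<psi> * Mf * \<beta>) < pibar_coef * (\<psi> - \<psi> * Mf * \<beta>)"
    using pibar_coef_pos N_le_1 \<psi>_gt_1 by simp
  also have "\<dots> = lam * \<psi>"
    using Mf_\<beta>_less_1 by (simp add: pibar_coef_def field_simps)
  finally have "\<sigma> * (pibar_coef * (N - \<psi> * Mf * \<beta>)) < \<sigma> * (lam * \<psi>)"
    using \<sigma>_pos by simp
  then have "taylor_den * slope_P < taylor_den"
    using M_le_1 unfolding taylor_den_slope_P by (simp add: slope_Z_def taylor_den_def algebra_simps)
  then show ?thesis
    using taylor_den_gt_1 by simp
qed

lemma slope_Z_ge_1_iff: "1 \<le> slope_Z \<longleftrightarrow> 0 \<le> (M - 1) * (1 - Mf * \<beta>) + lam * \<sigma> * N"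
proof -
  have "(1 - Mf * \<beta>) * (slope_Z - 1) = (M - 1) * (1 - Mf * \<beta>) + lam * \<sigma> * N"
    using slope_Z_mult by (simp add: algebra_simps)
  moreover have "1 \<le> slope_Z \<longleftrightarrow> 0 \<le> (1 - Mf * \<beta>) * (slope_Z - 1)"
    using Mf_\<beta>_less_1 by (simp add: zero_le_mult_iff)
  ultimately show ?thesis
    by simp
qed

lemma gap_Z_minus_gap_P: "gap_Z X e - gap_P X e = \<sigma> * (\<psi> * infl X (gap_P X e) + \<mu>)"
proof -
  have "taylor_den * (gap_Z X e - gap_P X e) = taylor_den * (\<sigma> * (\<psi> * infl X (gap_P X e) + \<mu>))"
    using taylor_den_gt_1
    by (simp add: gap_Z_def gap_P_def infl_def taylor_den_slope_P algebra_simps)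
      (simp add: taylor_den_def algebra_simps)
  then show ?thesis
    using taylor_den_gt_1 by simp
qed

lemma taylor_den_gap_Z_minus_gap_P:
  "taylor_den * (gap_Z X e - gap_P X e) = \<sigma> * (\<psi> * infl X (gap_Z X e) + \<mu>)"
  using taylor_den_gt_1
  by (simp add: gap_Z_def gap_P_def infl_def right_diff_distrib taylor_den_slope_P algebra_simps)
    (simp add: taylor_den_def algebra_simps)

lemma zlb_test_at_gap_Z: "\<psi> * infl X (gap_Z X e) \<le> - \<mu> \<longleftrightarrow> gap_Z X e \<le> gap_P X e"
proof -
  have "\<psi> * infl X (gap_Z X e) \<le> - \<mu> \<longleftrightarrow> \<sigma> * (\<psi> * infl X (gap_Z X e) + \<mu>) \<le> \<sigma> * 0"
    using \<sigma>_pos by (simp only: mult_le_cancel_left_pos) linarith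
  also have "\<dots> \<longleftrightarrow> taylor_den * (gap_Z X e - gap_P X e) \<le> taylor_den * 0"
    by (simp only: taylor_den_gap_Z_minus_gap_P) simp
  also have "\<dots> \<longleftrightarrow> gap_Z X e \<le> gap_P X e"
    using taylor_den_gt_1 by (simp only: mult_le_cancel_left_pos) auto
  finally show ?thesis .
qed

lemma zlb_test_at_gap_P: "\<psi> * infl X (gap_P X e) \<le> - \<mu> \<longleftrightarrow> gap_Z X e \<le> gap_P X e"
proof -
  have "\<psi> * infl X (gap_P X e) \<le> - \<mu> \<longleftrightarrow> \<sigma> * (\<psi> * infl X (gap_P X e) + \<mu>) \<le> \<sigma> * 0"
    using \<sigma>_pos by (simp only: mult_le_cancel_left_pos) linarith
  also have "\<dots> \<longleftrightarrow> gap_Z X e \<le> gap_P X e"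
    by (simp only: gap_Z_minus_gap_P[symmetric]) simp
  finally show ?thesis .
qed

lemma zlb_binds_state_at: "zlb_binds \<psi> \<mu> (snd (state_at X e)) \<longleftrightarrow> gap_Z X e \<le> gap_P X e"
  using zlb_test_at_gap_Z[of X e] zlb_test_at_gap_P[of X e]
  by (auto simp: state_at_def gap_def zlb_binds_def min_def)

lemma state_equations_iff:
  "(x = M * X - \<sigma> * (max (\<psi> * \<pi>) (- \<mu>) - N * (pibar_coef * X)) + e \<and> \<pi> = infl X x)
    \<longleftrightarrow> (x, \<pi>) = state_at X e"
proof -
  have zlb_equation: "x = M * X - \<sigma> * (- \<mu> - N * (pibar_coef * X)) + e \<longleftrightarrow> x = gap_Z X e"
    by (auto simp: gap_Z_def slope_Z_def algebra_simps)
  have "x = M * X - \<sigma> * (\<psi> * infl X x - N * (pibar_coef * X)) + e \<longleftrightarrow>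
      taylor_den * x = taylor_den * gap_P X e"
    using taylor_den_gt_1
    by (auto simp: gap_P_def infl_def taylor_den_slope_P slope_Z_def algebra_simps)
      (auto simp: taylor_den_def algebra_simps)
  then have taylor_equation:
      "x = M * X - \<sigma> * (\<psi> * infl X x - N * (pibar_coef * X)) + e \<longleftrightarrow> x = gap_P X e"
    using taylor_den_gt_1 by simp
  show ?thesis
    using zlb_equation taylor_equation zlb_test_at_gap_Z[of X e] zlb_test_at_gap_P[of X e]
    by (cases "gap_Z X e \<le> gap_P X e"; cases "\<psi> * \<pi> \<le> - \<mu>")
      (auto simp: state_at_def gap_def max_def)
qed

lemma is_BR_RPE_iff:
  "BR_RPE e1 Y1 Y2 \<longleftrightarrow> Y1 = state_at (xbar Y1 Y2) e1 \<and> Y2 = state_at (xbar Y1 Y2) e2"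
proof -
  obtain x1 \<pi>1 x2 \<pi>2 where Y: "Y1 = (x1, \<pi>1)" "Y2 = (x2, \<pi>2)"
    by fastforce
  define X where "X = xbar Y1 Y2"
  define pib where "pib = qb * \<pi>2 + (1 - qb) * \<pi>1"
  have average: "pib = lam * X + Mf * \<beta> * P"
    if "\<pi>1 = lam * x1 + Mf * \<beta> * P" "\<pi>2 = lam * x2 + Mf * \<beta> * P" for P
    using that by (simp add: pib_def X_def xbar_def Y algebra_simps)
  have pib_eq: "pib = pibar_coef * X"
    if "\<pi>1 = lam * x1 + Mf * \<beta> * pib \<and> \<pi>2 = lam * x2 + Mf * \<beta> * pib \<or>
        \<pi>1 = infl X x1 \<and> \<pi>2 = infl X x2"
    using that
  proof
    assume "\<pi>1 = lam * x1 + Mf * \<beta> * pib \<and> \<pi>2 = lam * x2 + Mf * \<beta> * pib"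
    then have "(1 - Mf * \<beta>) * pib = lam * X"
      using average[of pib] by (simp add: algebra_simps)
    then show ?thesis
      using Mf_\<beta>_less_1 by (simp add: pibar_coef_def field_simps)
  next
    assume "\<pi>1 = infl X x1 \<and> \<pi>2 = infl X x2"
    then have "pib = lam * X + Mf * \<beta> * (pibar_coef * X)"
      using average[of "pibar_coef * X"] by (simp add: infl_def)
    then show ?thesis
      using pibar_coef_fixed_point[of X] by linarith
  qed
  have "BR_RPE e1 Y1 Y2 \<longleftrightarrow>
      (x1 = M * X - \<sigma> * (max (\<psi> * \<pi>1) (- \<mu>) - N * pib) + e1 \<and> \<pi>1 = lam * x1 + Mf * \<beta> * pib) \<and>
      (x2 = M * X - \<sigma> * (max (\<psi> * \<pi>2) (- \<mu>) - N * pib) + e2 \<and> \<pi>2 = lam * x2 + Mf * \<beta> * pib)"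
    by (simp add: is_BR_RPE_def Let_def Y X_def xbar_def pib_def)
  also have "\<dots> \<longleftrightarrow>
      (x1 = M * X - \<sigma> * (max (\<psi> * \<pi>1) (- \<mu>) - N * (pibar_coef * X)) + e1 \<and> \<pi>1 = infl X x1) \<and>
      (x2 = M * X - \<sigma> * (max (\<psi> * \<pi>2) (- \<mu>) - N * (pibar_coef * X)) + e2 \<and> \<pi>2 = infl X x2)"
    using pib_eq by (auto simp: infl_def)
  also have "\<dots> \<longleftrightarrow> Y1 = state_at X e1 \<and> Y2 = state_at X e2"
    unfolding state_equations_iff Y ..
  finally show ?thesis
    unfolding X_def .
qed

lemma gap_in_regime: "gap X e = gap_in (zlb_binds \<psi> \<mu> (snd (state_at X e))) X e"
  by (simp add: zlb_binds_state_at gap_def gap_in_def)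

lemma gap_le_gap_in: "gap X e \<le> gap_in b X e"
  by (simp add: gap_def gap_in_def)

lemma branch_regime_state_at:
  "branch e1 (regime (state_at X e1) (state_at X e2)) X = xbar (state_at X e1) (state_at X e2) - X"
  by (simp add: branch_def xbar_def zlb_state1_type_of zlb_state2_type_of gap_in_regime[symmetric])
    (simp add: state_at_def)

lemma xbar_state_at_le_branch: "xbar (state_at X e1) (state_at X e2) - X \<le> branch e1 t X"
proof -
  have "qb * gap X e2 \<le> qb * gap_in (zlb_state2 t) X e2"
    using qbar_nonneg gap_le_gap_in by (rule mult_left_mono[rotated])
  moreover have "(1 - qb) * gap X e1 \<le> (1 - qb) * gap_in (zlb_state1 t) X e1"
    using qbar_le_1 gap_le_gap_in by (intro mult_left_mono) simp_all
  ultimately show ?thesis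
    by (simp add: branch_def xbar_def state_at_def)
qed

lemma branch_affine: "branch e1 t Y = branch e1 t X + branch_slope t * (Y - X)"
  by (cases t)
    (simp_all add: branch_def branch_slope_def weight_P_def gap_in_def gap_Z_def gap_P_def
      zlb_state1_def zlb_state2_def algebra_simps)

lemma branch_strict_mono:
  assumes "qb < 1" "e1' < e1"
  shows "branch e1' t X < branch e1 t X"
proof -
  have "gap_in b X e1' < gap_in b X e1" for b
    using assms(2) taylor_den_gt_1
    by (simp add: gap_in_def gap_Z_def gap_P_def divide_strict_right_mono)
  then show ?thesis
    using assms(1) by (simp add: branch_def)
qed

lemma BR_RPE_branches:
  assumes "BR_RPE e1 Y1 Y2"
  shows "branch e1 (regime Y1 Y2) (xbar Y1 Y2) = 0" and "0 \<le> branch e1 t (xbar Y1 Y2)"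
proof -
  have Y: "state_at (xbar Y1 Y2) e1 = Y1" "state_at (xbar Y1 Y2) e2 = Y2"
    using assms is_BR_RPE_iff by metis+
  show "branch e1 (regime Y1 Y2) (xbar Y1 Y2) = 0"
    using branch_regime_state_at[of e1 "xbar Y1 Y2"] unfolding Y by simp
  show "0 \<le> branch e1 t (xbar Y1 Y2)"
    using xbar_state_at_le_branch[of "xbar Y1 Y2" e1 t] unfolding Y by simp
qed

lemma BR_RPE_at_branch_zero:
  assumes "\<forall>t. 0 \<le> branch e1 t X" and "branch e1 t0 X = 0"
  shows "BR_RPE e1 (state_at X e1) (state_at X e2)" and "xbar (state_at X e1) (state_at X e2) = X"
proof -
  have "xbar (state_at X e1) (state_at X e2) - X \<le> 0"
    using xbar_state_at_le_branch[of X e1 t0] assms(2) by simp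
  moreover have "0 \<le> xbar (state_at X e1) (state_at X e2) - X"
    using branch_regime_state_at[of e1 X] assms(1) by metis
  ultimately show xbar: "xbar (state_at X e1) (state_at X e2) = X"
    by linarith
  show "BR_RPE e1 (state_at X e1) (state_at X e2)"
    unfolding is_BR_RPE_iff xbar by simp
qed

section \<open>E-stability\<close>

abbreviation "DT_of t \<equiv> DT t \<beta> \<sigma> lam \<psi> M Mf N p q"

lemma DT_carrier: "DT_of t \<in> carrier_mat 2 2"
  unfolding DT_def Let_def by (rule minus_carrier_mat) simp

lemma DT_entry:
  assumes "i < 2" "j < 2"
  shows "DT_of t $$ (i, j) = weight_P t * A_P \<beta> \<sigma> lam \<psi> M Mf N $$ (i, j)
    + (1 - weight_P t) * A_Z \<beta> \<sigma> lam M Mf N $$ (i, j) - (if i = j then 1 else 0)"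
  using assms by (cases t) (simp_all add: DT_def Let_def weight_P_def A_P_dims A_Z_dims)

lemma DT_entries:
  fixes t :: eq_type
  defines "w \<equiv> weight_P t" and "u \<equiv> weight_P t / taylor_den"
  shows "DT_of t $$ (0,0) = (1 - w) * M + u * M - 1"
    and "DT_of t $$ (0,1) = (1 - w) * (N * \<sigma>) + u * (N * \<sigma> - Mf * \<beta> * \<sigma> * \<psi>)"
    and "DT_of t $$ (1,0) = (1 - w) * (M * lam) + u * (M * lam)"
    and "DT_of t $$ (1,1) = (1 - w) * (Mf * \<beta> + N * lam * \<sigma>) + u * (Mf * \<beta> + N * lam * \<sigma>) - 1"
  by (simp_all add: DT_entry A_P_def A_Z_def mat_of_rows_list_def w_def u_def taylor_den_def)

(* The right-hand side is det (DT^t + I) - 1 < 0, so a positive determinant of DT^t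
   already forces a negative trace. *)
lemma DT_trace_plus_det:
  "DT_of t $$ (0,0) + DT_of t $$ (1,1) + det (DT_of t) =
    (1 - weight_P t + weight_P t / taylor_den) * M * Mf * \<beta> - 1"
proof -
  define u where "u = weight_P t / taylor_den"
  have w: "weight_P t = u * (1 + lam * \<sigma> * \<psi>)"
    using taylor_den_gt_1 by (simp add: u_def taylor_den_def)
  show ?thesis
    unfolding det_2x2[OF DT_carrier] DT_entries u_def[symmetric] unfolding w
    by (simp add: algebra_simps)
qed

lemma DT_det: "det (DT_of t) = - (1 - Mf * \<beta>) * branch_slope t"
proof -
  define u where "u = weight_P t / taylor_den"
  have w: "weight_P t = u * (1 + lam * \<sigma> * \<psi>)"
    using taylor_den_gt_1 by (simp add: u_def taylor_den_def)
  have w_slope_P: "weight_P t * slope_P = u * (slope_Z - \<sigma> * \<psi> * Mf * \<beta> * pibar_coef)"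
    using taylor_den_gt_1 by (simp add: u_def taylor_den_slope_P[symmetric])
  have "- (1 - Mf * \<beta>) * branch_slope t =
      - (1 - weight_P t + u) * ((1 - Mf * \<beta>) * slope_Z)
      + u * \<sigma> * \<psi> * Mf * \<beta> * ((1 - Mf * \<beta>) * pibar_coef) + (1 - Mf * \<beta>)"
    unfolding branch_slope_def w_slope_P by (simp add: algebra_simps)
  also have "\<dots> = - (1 - weight_P t + u) * ((1 - Mf * \<beta>) * M + \<sigma> * N * lam)
      + u * \<sigma> * \<psi> * Mf * \<beta> * lam + (1 - Mf * \<beta>)"
    by (simp only: slope_Z_mult pibar_coef_mult)
  finally show ?thesis
    unfolding det_2x2[OF DT_carrier] DT_entries u_def[symmetric] unfolding w
    by (simp add: algebra_simps)
qed

lemma weight_P_nonneg: "0 \<le> weight_P t" and weight_P_le_1: "weight_P t \<le> 1"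
  using qbar_nonneg qbar_le_1 by (cases t; simp add: weight_P_def)+

lemma E_stable_iff: "E_stable \<beta> \<sigma> lam \<mu> \<psi> M Mf N p q Y1 Y2 \<longleftrightarrow> branch_slope (regime Y1 Y2) < 0"
proof -
  define t where "t = regime Y1 Y2"
  define c where "c = 1 - weight_P t + weight_P t / taylor_den"
  have "weight_P t / taylor_den \<le> weight_P t"
    using weight_P_nonneg[of t] taylor_den_gt_1 by (simp add: divide_le_eq mult_le_cancel_left1)
  then have "0 \<le> c * M" "c * M \<le> 1"
    using weight_P_nonneg weight_P_le_1 taylor_den_gt_1 M_pos M_le_1
    by (simp_all add: c_def mult_le_one)
  then have "c * M * (Mf * \<beta>) \<le> Mf * \<beta>"
    using Mf_pos \<beta>_pos by (simp add: mult_left_le_one_le)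
  then have scale: "c * M * Mf * \<beta> < 1"
    using Mf_\<beta>_less_1 by (simp add: mult.assoc)
  have "E_stable \<beta> \<sigma> lam \<mu> \<psi> M Mf N p q Y1 Y2 \<longleftrightarrow>
      0 < det (DT_of t) \<and> DT_of t $$ (0,0) + DT_of t $$ (1,1) < 0"
    unfolding E_stable_def t_def by (rule routh_hurwitz_2x2[OF DT_carrier])
  also have "\<dots> \<longleftrightarrow> 0 < det (DT_of t)"
    using DT_trace_plus_det[of t] scale unfolding c_def by linarith
  also have "\<dots> \<longleftrightarrow> branch_slope t < 0"
    using Mf_\<beta>_less_1 by (simp add: DT_det zero_less_mult_iff)
  finally show ?thesis
    unfolding t_def .
qed

section \<open>The stable equilibrium\<close>

lemma stable_BR_RPE_rightmost:
  assumes "BR_RPE e1 Y1 Y2" "branch_slope (regime Y1 Y2) < 0" "BR_RPE e1 Z1 Z2"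
  shows "xbar Z1 Z2 \<le> xbar Y1 Y2"
proof -
  have "branch e1 (regime Y1 Y2) (xbar Z1 Z2) = branch_slope (regime Y1 Y2) * (xbar Z1 Z2 - xbar Y1 Y2)"
    using branch_affine[of e1 "regime Y1 Y2" "xbar Z1 Z2" "xbar Y1 Y2"] BR_RPE_branches(1)[OF assms(1)]
    by simp
  moreover have "0 \<le> branch e1 (regime Y1 Y2) (xbar Z1 Z2)"
    by (rule BR_RPE_branches(2)[OF assms(3)])
  ultimately show ?thesis
    using assms(2) by (simp add: zero_le_mult_iff)
qed

lemma stable_BR_RPE_unique:
  assumes "BR_RPE e1 Y1 Y2" "branch_slope (regime Y1 Y2) < 0"
    and "BR_RPE e1 Z1 Z2" "branch_slope (regime Z1 Z2) < 0"
  shows "Z1 = Y1 \<and> Z2 = Y2"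
proof -
  have "xbar Z1 Z2 = xbar Y1 Y2"
    using stable_BR_RPE_rightmost assms by (meson order_antisym)
  then show ?thesis
    using assms(1,3) is_BR_RPE_iff by metis
qed

lemma branch_slope_neg: "slope_Z < 1 \<Longrightarrow> branch_slope t < 0"
  using convex_bound_lt[OF slope_P_less_1 _ weight_P_nonneg, of slope_Z "1 - weight_P t"]
    weight_P_le_1 by (simp add: branch_slope_def)

lemma branch_slope_PP_neg: "branch_slope PP < 0"
  using slope_P_less_1 by (simp add: branch_slope_def weight_P_def)

lemma gap_Z_minus_gap_P_eq:
  "gap_Z X e - gap_P X e = (slope_Z - slope_P) * X + \<sigma> * \<mu> + e * (1 - 1 / taylor_den)"
  by (simp add: gap_Z_def gap_P_def algebra_simps)

lemma zlb_region_neg: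
  assumes "gap_Z X e \<le> gap_P X e" "0 \<le> e"
  shows "X < 0"
proof -
  have "0 \<le> e * (1 - 1 / taylor_den)"
    using assms(2) taylor_den_gt_1 by simp
  moreover have "0 < \<sigma> * \<mu>"
    using \<sigma>_pos \<mu>_pos by simp
  ultimately have "(slope_Z - slope_P) * X < 0"
    using assms(1) gap_Z_minus_gap_P_eq[of X e] by linarith
  then show ?thesis
    using slope_P_less_slope_Z by (simp add: mult_less_0_iff)
qed

lemma zlb_region_shock_antimono:
  assumes "e \<le> e'" "gap_Z X e' \<le> gap_P X e'"
  shows "gap_Z X e \<le> gap_P X e"
proof -
  have "e * (1 - 1 / taylor_den) \<le> e' * (1 - 1 / taylor_den)"
    using assms(1) taylor_den_gt_1 by (simp add: mult_right_mono)
  then show ?thesis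
    using assms(2) gap_Z_minus_gap_P_eq[of X e] gap_Z_minus_gap_P_eq[of X e'] by linarith
qed

lemma zlb_regimes_cross_right:
  assumes "gap_Z X e \<le> gap_P X e"
  obtains \<tau> where "X \<le> \<tau>" "gap_Z \<tau> e = gap_P \<tau> e"
proof
  define \<tau> where "\<tau> = X + (gap_P X e - gap_Z X e) / (slope_Z - slope_P)"
  show "X \<le> \<tau>"
    using assms slope_P_less_slope_Z by (simp add: \<tau>_def)
  have "(slope_Z - slope_P) * (\<tau> - X) = gap_P X e - gap_Z X e"
    using slope_P_less_slope_Z by (simp add: \<tau>_def)
  moreover have "gap_Z \<tau> e - gap_P \<tau> e = gap_Z X e - gap_P X e + (slope_Z - slope_P) * (\<tau> - X)"
    by (simp add: gap_Z_def gap_P_def algebra_simps)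
  ultimately show "gap_Z \<tau> e = gap_P \<tau> e"
    by simp
qed

lemma gap_P_gt_neg:
  assumes "X < 0" "0 \<le> e"
  shows "X < gap_P X e"
proof -
  have "0 < (slope_P - 1) * X"
    using assms(1) slope_P_less_1 by (simp add: mult_neg_neg)
  moreover have "0 \<le> e / taylor_den"
    using assms(2) taylor_den_gt_1 by simp
  ultimately show ?thesis
    by (simp add: gap_P_def algebra_simps)
qed

lemma no_kink_if_qbar_eq_1:
  assumes "qb = 1"
    and "branch e1 t z = 0" "0 \<le> branch_slope t" and "branch e1 t' z = 0" "branch_slope t' < 0"
  shows False
proof -
  have slope: "branch_slope s = (if zlb_state2 s then slope_Z else slope_P) - 1" for s
    using assms(1) by (cases s) (simp_all add: branch_slope_def weight_P_def zlb_state2_def)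
  have branch: "branch e1 s z = gap_in (zlb_state2 s) z e2 - z" for s
    using assms(1) by (simp add: branch_def)
  have "zlb_state2 t" "1 \<le> slope_Z"
    using slope[of t] assms(3) slope_P_less_1 by (auto split: if_splits)
  then have "\<not> zlb_state2 t'"
    using slope[of t'] assms(5) by auto
  then have "gap_Z z e2 = z" "gap_P z e2 = z"
    using branch[of t] branch[of t'] assms(2,4) \<open>zlb_state2 t\<close> by (simp_all add: gap_in_def)
  then have "z < 0"
    using zlb_region_neg[of z e2] e2_nonneg by simp
  then show False
    using gap_P_gt_neg[OF _ e2_nonneg] \<open>gap_P z e2 = z\<close> by force
qed

lemma kink_excludes_lower_shocks:
  assumes "qb < 1" "e1' < e1"
    and "branch e1 t z = 0" "0 \<le> branch_slope t" "branch e1 t' z = 0" "branch_slope t' < 0"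
  shows "\<not> BR_RPE e1' Z1 Z2"
proof
  assume Z: "BR_RPE e1' Z1 Z2"
  have "branch e1 t (xbar Z1 Z2) \<le> 0 \<or> branch e1 t' (xbar Z1 Z2) \<le> 0"
    using min_affine_nonpos_at_kink[of "branch e1" branch_slope, OF branch_affine assms(3-6)] .
  moreover have "0 \<le> branch e1' s (xbar Z1 Z2)" for s
    using BR_RPE_branches(2)[OF Z] .
  ultimately show False
    using branch_strict_mono[OF assms(1,2)] by (meson not_le order_less_le_trans)
qed

lemma stable_BR_RPE_exists:
  assumes threshold: "\<forall>e. (\<exists>Y1 Y2. BR_RPE e Y1 Y2) \<longleftrightarrow> ebar \<le> ereal e"
    and "ebar < ereal e1"
  shows "\<exists>Y1 Y2. BR_RPE e1 Y1 Y2 \<and> branch_slope (regime Y1 Y2) < 0"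
proof -
  have exists: "\<exists>Y1 Y2. BR_RPE e Y1 Y2" if "ebar < ereal e" for e
    using threshold that by (simp add: less_imp_le)
  obtain Y01 Y02 where "BR_RPE e1 Y01 Y02"
    using exists[OF assms(2)] by blast
  then have "\<And>t. 0 \<le> branch e1 t (xbar Y01 Y02)"
    by (rule BR_RPE_branches(2))
  then obtain z t0 where z: "\<forall>t. 0 \<le> branch e1 t z"
    and t0: "branch_slope t0 < 0" "branch e1 t0 z = 0"
    using min_affine_stable_zero_exists[of "branch e1" branch_slope, OF branch_affine
        finite_subset[OF subset_UNIV finite_UNIV_eq_type] branch_slope_PP_neg]
    by blast
  define Y1 Y2 where "Y1 = state_at z e1" and "Y2 = state_at z e2"
  have Y: "BR_RPE e1 Y1 Y2" and "xbar Y1 Y2 = z"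
    using BR_RPE_at_branch_zero[OF z t0(2)] by (simp_all add: Y1_def Y2_def)
  then have branch_Y: "branch e1 (regime Y1 Y2) z = 0"
    using BR_RPE_branches(1) by metis
  show ?thesis
  proof (rule ccontr)
    assume "\<not> ?thesis"
    then have slope_Y: "0 \<le> branch_slope (regime Y1 Y2)"
      using Y by (meson not_less)
    show False
    proof (cases "qb < 1")
      case True
      obtain e1' where "ebar < ereal e1'" "e1' < e1"
        using ereal_dense2[OF assms(2)] by auto
      then show False
        using exists kink_excludes_lower_shocks[OF True _ branch_Y slope_Y t0(2,1)] by blast
    next
      case False
      then show False
        using no_kink_if_qbar_eq_1 qbar_le_1 branch_Y slope_Y t0 by force
    qed
  qed
qed

lemma stable_BR_RPE_ex1:
  assumes threshold: "\<forall>e. (\<exists>Y1 Y2. BR_RPE e Y1 Y2) \<longleftrightarrow> ebar \<le> ereal e"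
    and "ebar < ereal e1"
  shows "\<exists>!Y. BR_RPE e1 (fst Y) (snd Y) \<and> E_stable \<beta> \<sigma> lam \<mu> \<psi> M Mf N p q (fst Y) (snd Y)"
proof -
  obtain Y1 Y2 where Y: "BR_RPE e1 Y1 Y2" "branch_slope (regime Y1 Y2) < 0"
    using stable_BR_RPE_exists[OF threshold assms(2)] by blast
  show ?thesis
  proof (rule ex1I[of _ "(Y1, Y2)"])
    fix Z :: "(real \<times> real) \<times> real \<times> real"
    assume "BR_RPE e1 (fst Z) (snd Z) \<and> E_stable \<beta> \<sigma> lam \<mu> \<psi> M Mf N p q (fst Z) (snd Z)"
    then have "fst Z = Y1 \<and> snd Z = Y2"
      using stable_BR_RPE_unique[OF Y, of "fst Z" "snd Z"] by (simp add: E_stable_iff)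
    then show "Z = (Y1, Y2)"
      by (simp add: prod_eq_iff)
  qed (simp add: Y E_stable_iff)
qed

lemma stable_BR_RPE_no_zlb_state2:
  assumes "1 \<le> slope_Z" and Y: "BR_RPE e1 Y1 Y2" and stable: "branch_slope (regime Y1 Y2) < 0"
  shows "\<not> zlb_binds \<psi> \<mu> (snd Y2)"
proof
  assume zlb2: "zlb_binds \<psi> \<mu> (snd Y2)"
  define X where "X = xbar Y1 Y2"
  have state: "Y1 = state_at X e1" "Y2 = state_at X e2"
    using Y is_BR_RPE_iff X_def by blast+
  have "\<not> zlb_binds \<psi> \<mu> (snd Y1)"
    using zlb2 stable assms(1) by (auto simp: type_of_def branch_slope_def weight_P_def)
  then have type: "regime Y1 Y2 = PZ"
    using zlb2 by (simp add: type_of_def)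
  have "\<not> gap_Z X e1 \<le> gap_P X e1" and zlb2_gap: "gap_Z X e2 \<le> gap_P X e2"
    using zlb2 \<open>\<not> zlb_binds \<psi> \<mu> (snd Y1)\<close> zlb_binds_state_at state by auto
  then have "e2 \<le> e1"
    using zlb_region_shock_antimono[of e1 e2 X] by (meson le_cases)
  obtain \<tau> where "X \<le> \<tau>" "gap_Z \<tau> e2 = gap_P \<tau> e2"
    using zlb_regimes_cross_right[OF zlb2_gap] .
  then have "\<tau> < 0"
    using zlb_region_neg[of \<tau> e2] e2_nonneg by simp
  have "branch e1 PZ \<tau> = branch_slope PZ * (\<tau> - X)"
    using branch_affine[of e1 PZ \<tau> X] BR_RPE_branches(1)[OF Y] type X_def by simp
  also have "\<dots> \<le> 0"
    using stable type \<open>X \<le> \<tau>\<close> by (simp add: mult_nonpos_nonneg)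
  finally have "qb * gap_P \<tau> e2 + (1 - qb) * gap_P \<tau> e1 \<le> \<tau>"
    using \<open>gap_Z \<tau> e2 = gap_P \<tau> e2\<close>
    by (simp add: branch_def gap_in_def zlb_state1_def zlb_state2_def)
  moreover have "(1 - qb) * gap_P \<tau> e2 \<le> (1 - qb) * gap_P \<tau> e1"
    using \<open>e2 \<le> e1\<close> qbar_le_1 taylor_den_gt_1
    by (intro mult_left_mono) (simp_all add: gap_P_def divide_right_mono)
  ultimately have "gap_P \<tau> e2 \<le> \<tau>"
    by (simp add: algebra_simps)
  then show False
    using gap_P_gt_neg[OF \<open>\<tau> < 0\<close> e2_nonneg] by simp
qed

end

theorem proposition13:
  fixes \<beta> \<sigma> lam \<mu> \<psi> M Mf N p q e1 e2 :: real and ebar :: ereal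
  assumes "0 < \<beta>" "\<beta> < 1" "\<sigma> > 0" "lam > 0" "\<mu> > 0" "\<psi> > 1"
    and "0 < M" "M \<le> 1" "0 < Mf" "Mf \<le> 1" "0 < N" "N \<le> 1" "min M (min Mf N) < 1"
    and "0 < p" "p \<le> 1" "0 < q" "q \<le> 1" "(p, q) \<noteq> (1, 1)"
    and "e2 \<ge> 0"
    and "ebar < \<infinity>"
    and threshold: "\<forall>e. (\<exists>Y1 Y2. is_BR_RPE \<beta> \<sigma> lam \<mu> \<psi> M Mf N p q e e2 Y1 Y2) \<longleftrightarrow> ebar \<le> ereal e"
    and "ereal e1 > ebar"
  shows "(\<exists>!Y. is_BR_RPE \<beta> \<sigma> lam \<mu> \<psi> M Mf N p q e1 e2 (fst Y) (snd Y) \<and>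
               E_stable \<beta> \<sigma> lam \<mu> \<psi> M Mf N p q (fst Y) (snd Y))
    \<and> ((M - 1) * (1 - Mf * \<beta>) + lam * \<sigma> * N \<ge> 0 \<longrightarrow>
         (\<forall>Y1 Y2. is_BR_RPE \<beta> \<sigma> lam \<mu> \<psi> M Mf N p q e1 e2 Y1 Y2 \<and>
                  E_stable \<beta> \<sigma> lam \<mu> \<psi> M Mf N p q Y1 Y2 \<longrightarrow>
                  type_of \<psi> \<mu> Y1 Y2 \<in> {PP, ZP}))
    \<and> ((M - 1) * (1 - Mf * \<beta>) + lam * \<sigma> * N < 0 \<longrightarrow>
         (\<forall>Y1 Y2. is_BR_RPE \<beta> \<sigma> lam \<mu> \<psi> M Mf N p q e1 e2 Y1 Y2 \<and>
                  E_stable \<beta> \<sigma> lam \<mu> \<psi> M Mf N p q Y1 Y2 \<longrightarrow>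
                  (\<forall>Z1 Z2. is_BR_RPE \<beta> \<sigma> lam \<mu> \<psi> M Mf N p q e1 e2 Z1 Z2 \<longrightarrow>
                           Z1 = Y1 \<and> Z2 = Y2)))"
proof -
  interpret br_model \<beta> \<sigma> lam \<mu> \<psi> M Mf N p q e2
    using assms by unfold_locales auto
  have "\<exists>!Y. BR_RPE e1 (fst Y) (snd Y) \<and> E_stable \<beta> \<sigma> lam \<mu> \<psi> M Mf N p q (fst Y) (snd Y)"
    using stable_BR_RPE_ex1[OF threshold \<open>ereal e1 > ebar\<close>] .
  moreover have "type_of \<psi> \<mu> Z1 Z2 \<in> {PP, ZP}"
    if "0 \<le> (M - 1) * (1 - Mf * \<beta>) + lam * \<sigma> * N" "BR_RPE e1 Z1 Z2"
      "E_stable \<beta> \<sigma> lam \<mu> \<psi> M Mf N p q Z1 Z2" for Z1 Z2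
    using stable_BR_RPE_no_zlb_state2[of e1 Z1 Z2] that
    by (simp add: slope_Z_ge_1_iff E_stable_iff type_of_def)
  moreover have "Z1 = Y1' \<and> Z2 = Y2'"
    if "(M - 1) * (1 - Mf * \<beta>) + lam * \<sigma> * N < 0" "BR_RPE e1 Y1' Y2'" "BR_RPE e1 Z1 Z2"
    for Y1' Y2' Z1 Z2
  proof -
    have "branch_slope t < 0" for t
      using that(1) slope_Z_ge_1_iff by (simp add: branch_slope_neg)
    then show ?thesis
      using stable_BR_RPE_unique[OF that(2) _ that(3)] by blast
  qed
  ultimately show ?thesis
    by (intro conjI impI allI) blast+
qed

end
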